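(* Let $\mathcal{R}=(G_0,e\to R)$ be an expanding replacement system with limit space $X$. Then: (1) the interior of each cell of $X$ contains at least one gluing vertex and at least one regular point; (2) if $p$ lies in the interior of a cell $C(e')$, then every point of $\Omega$ mapping to $p$ has $e'$ as a prefix; (3) if $e'$ is a prefix of $f'$, then $C(e')\supseteq C(f')$; (4) if neither of $e',f'$ is a prefix of the other, then the interiors of $C(e')$ and $C(f')$ are disjoint.
   Context: A graph means a finite directed multigraph (loops, multiple edges allowed). A replacement system $\mathcal{R}=(G_0,e\to R)$: $G_0$ a graph, $e$ a non-loop directed edge from $v$ to $w$, $R$ a graph containing $v,w$ (initial and terminal vertices; other vertices interior). Replacing an edge $\varepsilon$ means deleting it and gluing in a copy of $R$ with initial/terminal vertices identified with those of $\varepsilon$; new edges are $\varepsilon\zeta$ ($\zeta\in E(R)$), new vertices $\varepsilon\nu$ ($\nu$ interior). The full expansion $G_n$ is obtained from $G_{n-1}$ by replacing every edge; edges of $G_n$ are words $\varepsilon_0\cdots\varepsilon_n$ and $V(G_0)\subset V(G_1)\subset\cdots$. $\mathcal{R}$ is expanding if neither $G_0$ nor $R$ has isolated vertices, the initial and terminal vertices of $R$ are not adjacent, and $R$ has at least three vertices and two edges. $\Omega=E(G_0)\times E(R)^{\mathbb{N}}$; $\varepsilon_0\varepsilon_1\cdots\sim\varepsilon'_0\varepsilon'_1\cdots$ iff for all $n$ the edges $\varepsilon_0\cdots\varepsilon_n$, $\varepsilon'_0\cdots\varepsilon'_n$ of $G_n$ share a vertex; $X=\Omega/\sim$ with quotient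 map $q$. Gluing vertices are elements of $\bigcup_n V(G_n)$; a sequence represents gluing vertex $u$ if $\varepsilon_0\cdots\varepsilon_n$ is incident on $u$ for all large $n$, and $u$ is identified with the point of $X$ that its representatives map to. Points of $X$ that are not gluing vertices are regular points. For an edge $e'=\varepsilon_0\cdots\varepsilon_n$ of $G_n$, the cell $C(e')$ is $q$ of the set of sequences with prefix $e'$; its boundary points are the endpoints of $e'$ (as gluing vertices), and its interior is $C(e')$ minus its boundary points. *)

theory Defs
  imports "Graph_Theory.Digraph"
begin

text \<open>Replacement system (G0, e -> R) with R having initial vertex v and terminal vertex w.
 Vertices of the expansions G_n are encoded as
   Inl x                 (x a vertex of G0), or
   Inr (b, zs, nu)       (the new vertex  b zs nu  where b is an edge of G0, zs a word of
                          edges of R and nu an interior vertex of R).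
 Edges of G_n are pairs (b, zs) with b an edge of G0 and zs a word of length n over E(R).\<close>

type_synonym ('a,'b,'c,'d) gvertex = "'a + ('b \<times> 'd list \<times> 'c)"

definition no_isolated :: "('v,'e) pre_digraph \<Rightarrow> bool" where
  "no_isolated G \<longleftrightarrow> (\<forall>x\<in>verts G. \<exists>a\<in>arcs G. tail G a = x \<or> head G a = x)"

definition expanding :: "('a,'b) pre_digraph \<Rightarrow> ('c,'d) pre_digraph \<Rightarrow> 'c \<Rightarrow> 'c \<Rightarrow> bool" where
  "expanding G0 R v w \<longleftrightarrow>
     fin_digraph G0 \<and> fin_digraph R \<and> v \<in> verts R \<and> w \<in> verts R \<and> v \<noteq> w \<and>
     no_isolated G0 \<and> no_isolated R \<and>
     (\<forall>a\<in>arcs R. \<not> (tail R a = v \<and> head R a = w) \<and> \<not> (tail R a = w \<and> head R a = v)) \<and>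
     card (verts R) \<ge> 3 \<and> card (arcs R) \<ge> 2"

text \<open>Endpoint (s = True: initial, s = False: terminal) of the edge b (rev rzs) of G_n.\<close>
fun ep_rev :: "('a,'b) pre_digraph \<Rightarrow> ('c,'d) pre_digraph \<Rightarrow> 'c \<Rightarrow> 'c \<Rightarrow> bool \<Rightarrow> 'b \<Rightarrow> 'd list
      \<Rightarrow> ('a,'b,'c,'d) gvertex" where
  "ep_rev G0 R v w s b [] = Inl (if s then tail G0 b else head G0 b)"
| "ep_rev G0 R v w s b (z # zs) =
     (let u = (if s then tail R z else head R z) in
      if u = v then ep_rev G0 R v w True b zs
      else if u = w then ep_rev G0 R v w False b zs
      else Inr (b, rev zs, u))"

definition edge_src :: "('a,'b) pre_digraph \<Rightarrow> ('c,'d) pre_digraph \<Rightarrow> 'c \<Rightarrow> 'c \<Rightarrow> 'b \<times> 'd list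
      \<Rightarrow> ('a,'b,'c,'d) gvertex" where
  "edge_src G0 R v w e' = ep_rev G0 R v w True (fst e') (rev (snd e'))"

definition edge_tgt :: "('a,'b) pre_digraph \<Rightarrow> ('c,'d) pre_digraph \<Rightarrow> 'c \<Rightarrow> 'c \<Rightarrow> 'b \<times> 'd list
      \<Rightarrow> ('a,'b,'c,'d) gvertex" where
  "edge_tgt G0 R v w e' = ep_rev G0 R v w False (fst e') (rev (snd e'))"

definition edge_ends :: "('a,'b) pre_digraph \<Rightarrow> ('c,'d) pre_digraph \<Rightarrow> 'c \<Rightarrow> 'c \<Rightarrow> 'b \<times> 'd list
      \<Rightarrow> ('a,'b,'c,'d) gvertex set" where
  "edge_ends G0 R v w e' = {edge_src G0 R v w e', edge_tgt G0 R v w e'}"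

definition edges_n :: "('a,'b) pre_digraph \<Rightarrow> ('c,'d) pre_digraph \<Rightarrow> nat \<Rightarrow> ('b \<times> 'd list) set" where
  "edges_n G0 R n = {(b, zs). b \<in> arcs G0 \<and> length zs = n \<and> set zs \<subseteq> arcs R}"

definition verts_n :: "('a,'b) pre_digraph \<Rightarrow> ('c,'d) pre_digraph \<Rightarrow> 'c \<Rightarrow> 'c \<Rightarrow> nat
      \<Rightarrow> ('a,'b,'c,'d) gvertex set" where
  "verts_n G0 R v w n = Inl ` verts G0 \<union>
     {Inr (b, zs, nu) | b zs nu. b \<in> arcs G0 \<and> set zs \<subseteq> arcs R \<and> length zs < n \<and>
                                 nu \<in> verts R - {v, w}}"

definition gluing_vertices :: "('a,'b) pre_digraph \<Rightarrow> ('c,'d) pre_digraph \<Rightarrow> 'c \<Rightarrow> 'c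
      \<Rightarrow> ('a,'b,'c,'d) gvertex set" where
  "gluing_vertices G0 R v w = (\<Union>n. verts_n G0 R v w n)"

definition Omega :: "('a,'b) pre_digraph \<Rightarrow> ('c,'d) pre_digraph \<Rightarrow> ('b \<times> (nat \<Rightarrow> 'd)) set" where
  "Omega G0 R = {(b, f). b \<in> arcs G0 \<and> (\<forall>i. f i \<in> arcs R)}"

definition pref :: "nat \<Rightarrow> 'b \<times> (nat \<Rightarrow> 'd) \<Rightarrow> 'b \<times> 'd list" where
  "pref n om = (fst om, map (snd om) [0..<n])"

definition glue :: "('a,'b) pre_digraph \<Rightarrow> ('c,'d) pre_digraph \<Rightarrow> 'c \<Rightarrow> 'c
      \<Rightarrow> 'b \<times> (nat \<Rightarrow> 'd) \<Rightarrow> 'b \<times> (nat \<Rightarrow> 'd) \<Rightarrow> bool" where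
  "glue G0 R v w om om' \<longleftrightarrow>
     (\<forall>n. edge_ends G0 R v w (pref n om) \<inter> edge_ends G0 R v w (pref n om') \<noteq> {})"

definition qmap :: "('a,'b) pre_digraph \<Rightarrow> ('c,'d) pre_digraph \<Rightarrow> 'c \<Rightarrow> 'c
      \<Rightarrow> 'b \<times> (nat \<Rightarrow> 'd) \<Rightarrow> ('b \<times> (nat \<Rightarrow> 'd)) set" where
  "qmap G0 R v w om = {om' \<in> Omega G0 R. glue G0 R v w om om'}"

definition limit_space :: "('a,'b) pre_digraph \<Rightarrow> ('c,'d) pre_digraph \<Rightarrow> 'c \<Rightarrow> 'c
      \<Rightarrow> ('b \<times> (nat \<Rightarrow> 'd)) set set" where
  "limit_space G0 R v w = qmap G0 R v w ` Omega G0 R"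

definition represents :: "('a,'b) pre_digraph \<Rightarrow> ('c,'d) pre_digraph \<Rightarrow> 'c \<Rightarrow> 'c
      \<Rightarrow> 'b \<times> (nat \<Rightarrow> 'd) \<Rightarrow> ('a,'b,'c,'d) gvertex \<Rightarrow> bool" where
  "represents G0 R v w om u \<longleftrightarrow> (\<exists>N. \<forall>n\<ge>N. u \<in> edge_ends G0 R v w (pref n om))"

definition vpts :: "('a,'b) pre_digraph \<Rightarrow> ('c,'d) pre_digraph \<Rightarrow> 'c \<Rightarrow> 'c
      \<Rightarrow> ('a,'b,'c,'d) gvertex \<Rightarrow> ('b \<times> (nat \<Rightarrow> 'd)) set set" where
  "vpts G0 R v w u = qmap G0 R v w ` {om \<in> Omega G0 R. represents G0 R v w om u}"

definition regular_point :: "('a,'b) pre_digraph \<Rightarrow> ('c,'d) pre_digraph \<Rightarrow> 'c \<Rightarrow> 'c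
      \<Rightarrow> ('b \<times> (nat \<Rightarrow> 'd)) set \<Rightarrow> bool" where
  "regular_point G0 R v w p \<longleftrightarrow>
     p \<in> limit_space G0 R v w \<and> (\<forall>u\<in>gluing_vertices G0 R v w. p \<notin> vpts G0 R v w u)"

definition seq_has_prefix :: "'b \<times> (nat \<Rightarrow> 'd) \<Rightarrow> 'b \<times> 'd list \<Rightarrow> bool" where
  "seq_has_prefix om e' \<longleftrightarrow> pref (length (snd e')) om = e'"

definition edge_prefix :: "'b \<times> 'd list \<Rightarrow> 'b \<times> 'd list \<Rightarrow> bool" where
  "edge_prefix e' f' \<longleftrightarrow> fst e' = fst f' \<and> (\<exists>ys. snd f' = snd e' @ ys)"

definition cell :: "('a,'b) pre_digraph \<Rightarrow> ('c,'d) pre_digraph \<Rightarrow> 'c \<Rightarrow> 'c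
      \<Rightarrow> 'b \<times> 'd list \<Rightarrow> ('b \<times> (nat \<Rightarrow> 'd)) set set" where
  "cell G0 R v w e' = qmap G0 R v w ` {om \<in> Omega G0 R. seq_has_prefix om e'}"

definition cell_boundary :: "('a,'b) pre_digraph \<Rightarrow> ('c,'d) pre_digraph \<Rightarrow> 'c \<Rightarrow> 'c
      \<Rightarrow> 'b \<times> 'd list \<Rightarrow> ('b \<times> (nat \<Rightarrow> 'd)) set set" where
  "cell_boundary G0 R v w e' = (\<Union>u\<in>edge_ends G0 R v w e'. vpts G0 R v w u)"

definition cell_interior :: "('a,'b) pre_digraph \<Rightarrow> ('c,'d) pre_digraph \<Rightarrow> 'c \<Rightarrow> 'c
      \<Rightarrow> 'b \<times> 'd list \<Rightarrow> ('b \<times> (nat \<Rightarrow> 'd)) set set" where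
  "cell_interior G0 R v w e' = cell G0 R v w e' - cell_boundary G0 R v w e'"

end

theory Submission
  imports Defs
begin

text \<open>Two sequences are glued exactly when they agree or when, from some level on, their edges
  share a common gluing vertex as an endpoint. In an expanding system a sequence keeps at most one
  such vertex, since two old endpoints can only survive a replacement through an arc joining v and
  w, or through a loop. So if a point in the interior of C(e') had a representative without
  prefix e', the common vertex would be older than e' and thus an endpoint of e', i.e. the point
  would lie on the boundary; this gives (2), from which (3) and (4) follow.

  For (1), extend e' by an arc at an interior vertex x of R and then always by an arc at v or w so
  as to keep the new vertex e'x as an endpoint: this represents a gluing vertex in the interior.
  Alternating an arc at x with a suitable arc at v or w instead pushes both endpoints to new
  vertices every second step, so the resulting sequence represents no vertex at all.\<close>

text \<open>Inr (b, zs, nu) is created when the edge (b, zs) of G_(length zs) is replaced, so the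
  vertex level is the least n with u in V(G_n).\<close>
fun vertex_level :: "('a,'b,'c,'d) gvertex \<Rightarrow> nat" where
  "vertex_level (Inl x) = 0"
| "vertex_level (Inr (b, zs, nu)) = Suc (length zs)"

lemma ep_rev_snoc:
  "ep_rev G0 R v w s b (rev (zs @ [z])) =
   (let u = (if s then tail R z else head R z) in
    if u = v then ep_rev G0 R v w True b (rev zs)
    else if u = w then ep_rev G0 R v w False b (rev zs)
    else Inr (b, zs, u))"
  by (simp add: Let_def)

lemma ep_rev_Inr_strict_prefix:
  "ep_rev G0 R v w s b (rev zs) = Inr (b', zs', nu) \<Longrightarrow> b' = b \<and> (\<exists>ys. ys \<noteq> [] \<and> zs = zs' @ ys)"
  by (induction zs arbitrary: s rule: rev_induct) (fastforce simp: Let_def split: if_splits)+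

lemma vertex_level_ep_rev_le: "vertex_level (ep_rev G0 R v w s b (rev zs)) \<le> length zs"
proof (cases "ep_rev G0 R v w s b (rev zs)")
  case (Inr y)
  then show ?thesis
    by (cases y) (auto dest!: ep_rev_Inr_strict_prefix simp: Suc_le_eq)
qed simp

lemma ep_rev_append_low_level:
  "vertex_level (ep_rev G0 R v w s b (rev (zs @ ys))) \<le> length zs \<Longrightarrow>
   ep_rev G0 R v w s b (rev (zs @ ys)) \<in> {ep_rev G0 R v w True b (rev zs), ep_rev G0 R v w False b (rev zs)}"
proof (induction ys arbitrary: s rule: rev_induct)
  case Nil
  then show ?case
    by (cases s) auto
next
  case (snoc z ys)
  then show ?case
    using snoc.IH[of True] snoc.IH[of False]
    by (simp only: append_assoc[symmetric] ep_rev_snoc) (auto simp: Let_def split: if_splits)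
qed

lemma edge_ends_pref:
  "edge_ends G0 R v w (pref n om) =
   {ep_rev G0 R v w True (fst om) (rev (map (snd om) [0..<n])),
    ep_rev G0 R v w False (fst om) (rev (map (snd om) [0..<n]))}"
  by (simp add: edge_ends_def edge_src_def edge_tgt_def pref_def)

lemma map_upt_append: "n \<le> m \<Longrightarrow> map f [0..<m] = map f [0..<n] @ map f [n..<m]"
  by (metis le_add_diff_inverse map_append upt_add_eq_append zero_le)

lemma pref_take: "n \<le> k \<Longrightarrow> pref n om = (fst (pref k om), take n (snd (pref k om)))"
  by (simp add: pref_def take_map)

lemma pref_eq_le: "pref k om = pref k om' \<Longrightarrow> n \<le> k \<Longrightarrow> pref n om = pref n om'"
  using pref_take[of n k om] pref_take[of n k om'] by simp

lemma edge_ends_pref_downward: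
  "u \<in> edge_ends G0 R v w (pref m om) \<Longrightarrow> vertex_level u \<le> n \<Longrightarrow> n \<le> m \<Longrightarrow>
   u \<in> edge_ends G0 R v w (pref n om)"
  using ep_rev_append_low_level[of G0 R v w _ "fst om" "map (snd om) [0..<n]" "map (snd om) [n..<m]"]
  by (auto simp: edge_ends_pref map_upt_append[of n m "snd om"])

lemma Inr_in_edge_ends_pref:
  assumes "Inr (b', zs', nu) \<in> edge_ends G0 R v w (pref m om)"
  shows "pref (length zs') om = (b', zs') \<and> length zs' < m"
proof -
  obtain s where "ep_rev G0 R v w s (fst om) (rev (map (snd om) [0..<m])) = Inr (b', zs', nu)"
    using assms by (auto simp: edge_ends_pref)
  from ep_rev_Inr_strict_prefix[OF this]
  obtain ys where ys: "b' = fst om" "ys \<noteq> []" "map (snd om) [0..<m] = zs' @ ys"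
    by blast
  have "length zs' < m"
    using arg_cong[OF ys(3), of length] ys(2) by simp
  with ys show ?thesis
    using pref_take[of "length zs'" m om] by (simp add: pref_def)
qed

lemma represents_in_edge_ends:
  "represents G0 R v w om u \<Longrightarrow> vertex_level u \<le> n \<Longrightarrow> u \<in> edge_ends G0 R v w (pref n om)"
  unfolding represents_def by (meson edge_ends_pref_downward max.cobounded1 max.cobounded2)

lemma common_Inr_endpoint_imp_pref_eq:
  assumes "Inr (b', zs', nu) \<in> edge_ends G0 R v w (pref m om)"
    and "Inr (b', zs', nu) \<in> edge_ends G0 R v w (pref m' om')"
    and "n \<le> length zs'"
  shows "pref n om = pref n om'"
proof -
  have "pref (length zs') om = pref (length zs') om'"
    using assms(1,2)[THEN Inr_in_edge_ends_pref] by simp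
  then show ?thesis
    using assms(3) by (rule pref_eq_le)
qed

lemma represents_same_imp_pref_eq:
  assumes "represents G0 R v w om u" "represents G0 R v w om' u" "n < vertex_level u"
  shows "pref n om = pref n om'"
proof -
  obtain b' zs' nu where u: "u = Inr (b', zs', nu)"
    using assms(3) by (cases u rule: vertex_level.cases) auto
  moreover have "u \<in> edge_ends G0 R v w (pref (vertex_level u) om)"
    "u \<in> edge_ends G0 R v w (pref (vertex_level u) om')"
    using assms(1,2) by (simp_all add: represents_in_edge_ends)
  ultimately show ?thesis
    using common_Inr_endpoint_imp_pref_eq assms(3) by (metis less_Suc_eq_le vertex_level.simps(2))
qed

lemma decreasing_nonempty_common_point:
  fixes S :: "nat \<Rightarrow> 'a set"
  assumes "finite (S N)" and "\<And>n. S n \<noteq> {}"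
    and "\<And>n n'. N \<le> n' \<Longrightarrow> n' \<le> n \<Longrightarrow> S n \<subseteq> S n'"
  shows "\<exists>x. \<forall>n\<ge>N. x \<in> S n"
proof (rule ccontr)
  assume "\<nexists>x. \<forall>n\<ge>N. x \<in> S n"
  then obtain k where k: "\<And>x. N \<le> k x \<and> x \<notin> S (k x)"
    by metis
  define n where "n = Max (insert N (k ` S N))"
  have "N \<le> n" and kn: "\<And>x. x \<in> S N \<Longrightarrow> k x \<le> n"
    using assms(1) by (auto simp: n_def)
  obtain x where "x \<in> S n"
    using assms(2) by blast
  then have "x \<in> S N"
    using assms(3)[OF order_refl \<open>N \<le> n\<close>] by blast
  then show False
    using assms(3)[OF _ kn] k \<open>x \<in> S n\<close> by blast
qed

lemma glue_cases:
  assumes "glue G0 R v w om om'"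
  obtains "\<And>n. pref n om = pref n om'"
  | u where "represents G0 R v w om u" "represents G0 R v w om' u"
proof (cases "\<forall>n. pref n om = pref n om'")
  case False
  then obtain N where N: "pref N om \<noteq> pref N om'"
    by blast
  define S where "S n = edge_ends G0 R v w (pref n om) \<inter> edge_ends G0 R v w (pref n om')" for n
  have low: "vertex_level u \<le> N" if "u \<in> S n" "N \<le> n" for u n
  proof (rule ccontr)
    assume "\<not> vertex_level u \<le> N"
    then obtain b' zs' nu where u: "u = Inr (b', zs', nu)" and "N \<le> length zs'"
      by (cases u rule: vertex_level.cases) auto
    then show False
      using common_Inr_endpoint_imp_pref_eq[of b' zs' nu G0 R v w n om n om' N] N that(1)
      by (simp add: S_def u)
  qed
  have "\<exists>u. \<forall>n\<ge>N. u \<in> S n"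
  proof (rule decreasing_nonempty_common_point)
    show "finite (S N)"
      by (simp add: S_def edge_ends_def)
    show "S n \<noteq> {}" for n
      using assms unfolding glue_def S_def by blast
    show "S n \<subseteq> S n'" if "N \<le> n'" "n' \<le> n" for n n'
    proof
      fix u assume "u \<in> S n"
      then have "vertex_level u \<le> n'"
        using low[of u n] that by simp
      with \<open>u \<in> S n\<close> show "u \<in> S n'"
        unfolding S_def by (auto intro: edge_ends_pref_downward[OF _ _ that(2)])
    qed
  qed
  then show thesis
    using that(2) unfolding represents_def S_def by blast
qed (use that(1) in blast)

lemma expanding_arc_not_vw:
  assumes "expanding G0 R v w" and "a \<in> arcs R"
  shows "\<not> (tail R a = v \<and> head R a = w) \<and> \<not> (tail R a = w \<and> head R a = v)"
  using assms unfolding expanding_def by blast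

lemma old_endpoint_imp_end_in_vw:
  "vertex_level (ep_rev G0 R v w s b (z # rev ys)) \<le> length ys \<Longrightarrow>
   (if s then tail R z else head R z) \<in> {v, w}"
  by (cases s) (auto simp: Let_def split: if_splits)

text \<open>Two distinct vertices represented by the same sequence would eventually be the two endpoints
  of its edges without being new, so the next letter would have both ends in {v, w}. As no arc of R
  joins v and w, that letter is a loop, and then both endpoints coincide.\<close>
lemma represents_unique:
  assumes ex: "expanding G0 R v w" and om: "om \<in> Omega G0 R"
    and r: "represents G0 R v w om u" "represents G0 R v w om u'"
  shows "u = u'"
proof (rule ccontr)
  assume "u \<noteq> u'"
  obtain N where N: "\<And>m. N \<le> m \<Longrightarrow>
      u \<in> edge_ends G0 R v w (pref m om) \<and> u' \<in> edge_ends G0 R v w (pref m om)"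
    using r unfolding represents_def by (metis max.bounded_iff)
  define n where "n = max N (max (vertex_level u) (vertex_level u'))"
  define ys where "ys = map (snd om) [0..<n]"
  define z where "z = snd om n"
  define T F where "T = ep_rev G0 R v w True (fst om) (z # rev ys)"
    and "F = ep_rev G0 R v w False (fst om) (z # rev ys)"
  have "edge_ends G0 R v w (pref (Suc n) om) = {T, F}"
    by (simp add: edge_ends_pref T_def F_def ys_def z_def)
  moreover have "N \<le> Suc n"
    by (simp add: n_def)
  ultimately have "u \<in> {T, F}" "u' \<in> {T, F}"
    using N by blast+
  with \<open>u \<noteq> u'\<close> have "T \<in> {u, u'}" "F \<in> {u, u'}"
    by blast+
  moreover have "vertex_level u \<le> length ys" "vertex_level u' \<le> length ys"
    by (simp_all add: ys_def n_def)
  ultimately have "vertex_level T \<le> length ys" "vertex_level F \<le> length ys"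
    by auto
  then have "tail R z \<in> {v, w}" "head R z \<in> {v, w}"
    unfolding T_def F_def by (metis old_endpoint_imp_end_in_vw)+
  moreover have "z \<in> arcs R"
    using om by (auto simp: Omega_def z_def)
  note expanding_arc_not_vw[OF ex this]
  ultimately have "tail R z = head R z"
    by auto
  then have "T = F"
    by (simp add: T_def F_def Let_def)
  with \<open>u \<in> {T, F}\<close> \<open>u' \<in> {T, F}\<close> \<open>u \<noteq> u'\<close> show False
    by blast
qed

lemma qmap_eq_imp_glue:
  "om' \<in> Omega G0 R \<Longrightarrow> qmap G0 R v w om = qmap G0 R v w om' \<Longrightarrow> glue G0 R v w om om'"
proof -
  assume "om' \<in> Omega G0 R" and q: "qmap G0 R v w om = qmap G0 R v w om'"
  then have "om' \<in> qmap G0 R v w om'"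
    by (simp add: qmap_def glue_def edge_ends_def)
  then show ?thesis
    unfolding q[symmetric] by (simp add: qmap_def)
qed

lemma represents_if_qmap_in_vpts:
  assumes ex: "expanding G0 R v w" and om: "om \<in> Omega G0 R"
    and p: "qmap G0 R v w om \<in> vpts G0 R v w u"
  shows "represents G0 R v w om u"
proof -
  obtain om' where om': "om' \<in> Omega G0 R" "represents G0 R v w om' u"
    "qmap G0 R v w om = qmap G0 R v w om'"
    using p unfolding vpts_def by blast
  from qmap_eq_imp_glue[OF om'(1,3)] show ?thesis
  proof (cases rule: glue_cases)
    case 1
    with om'(2) show ?thesis
      unfolding represents_def by simp
  next
    case (2 u')
    with represents_unique[OF ex om'(1) om'(2)] show ?thesis
      by blast
  qed
qed

lemma seq_has_prefix_iff: "seq_has_prefix om e' \<longleftrightarrow> (\<exists>n. e' = pref n om)"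
  unfolding seq_has_prefix_def by (metis pref_def length_map length_upt minus_nat.diff_0 snd_conv)

lemma seq_has_prefix_comparable:
  "seq_has_prefix om e' \<Longrightarrow> seq_has_prefix om f' \<Longrightarrow> edge_prefix e' f' \<or> edge_prefix f' e'"
  unfolding seq_has_prefix_iff edge_prefix_def pref_def
  by (metis fst_conv snd_conv map_upt_append nle_le)

lemma seq_has_prefix_edge_prefix:
  assumes "edge_prefix e' f'" and "seq_has_prefix om f'"
  shows "seq_has_prefix om e'"
proof -
  obtain m where f': "f' = pref m om"
    using assms(2) unfolding seq_has_prefix_iff by blast
  obtain ys where "fst e' = fst om" and ys: "snd f' = snd e' @ ys"
    using assms(1) unfolding edge_prefix_def f' by (auto simp: pref_def)
  moreover have "length (snd e') \<le> m"
    using arg_cong[OF ys, of length] by (simp add: f' pref_def)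
  ultimately have "e' = pref (length (snd e')) om"
    using pref_take[of "length (snd e')" m om] ys by (simp add: f' prod_eq_iff) (simp add: pref_def)
  then show ?thesis
    unfolding seq_has_prefix_iff by blast
qed

lemma cell_mono: "edge_prefix e' f' \<Longrightarrow> cell G0 R v w f' \<subseteq> cell G0 R v w e'"
  unfolding cell_def using seq_has_prefix_edge_prefix by blast

lemma cell_interior_imp_seq_has_prefix:
  assumes "p \<in> cell_interior G0 R v w e'" and om: "om \<in> Omega G0 R" and "qmap G0 R v w om = p"
  shows "seq_has_prefix om e'"
proof -
  have p: "qmap G0 R v w om \<in> cell_interior G0 R v w e'"
    using assms by simp
  define n where "n = length (snd e')"
  obtain om0 where om0: "om0 \<in> Omega G0 R" "pref n om0 = e'" "qmap G0 R v w om = qmap G0 R v w om0"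
    using p unfolding cell_interior_def cell_def seq_has_prefix_def n_def by auto
  have not_boundary: "qmap G0 R v w om \<notin> vpts G0 R v w u" if "u \<in> edge_ends G0 R v w e'" for u
    using p that unfolding cell_interior_def cell_boundary_def by blast
  from qmap_eq_imp_glue[OF om0(1,3)] show ?thesis
  proof (cases rule: glue_cases)
    case 1
    with om0(2) show ?thesis
      by (simp add: seq_has_prefix_def n_def)
  next
    case (2 u)
    show ?thesis
    proof (cases "vertex_level u \<le> n")
      case True
      then have "u \<in> edge_ends G0 R v w e'"
        using represents_in_edge_ends[OF 2(2)] om0(2) by blast
      moreover have "qmap G0 R v w om \<in> vpts G0 R v w u"
        using om 2(1) unfolding vpts_def by blast
      ultimately show ?thesis
        using not_boundary by blast
    next
      case False
      then have "pref n om = pref n om0"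
        using represents_same_imp_pref_eq[OF 2] by simp
      with om0(2) show ?thesis
        by (simp add: seq_has_prefix_def n_def)
    qed
  qed
qed

lemma cell_interior_disjoint:
  assumes "\<not> edge_prefix e' f'" and "\<not> edge_prefix f' e'"
  shows "cell_interior G0 R v w e' \<inter> cell_interior G0 R v w f' = {}"
proof -
  have False if p: "p \<in> cell_interior G0 R v w e'" "p \<in> cell_interior G0 R v w f'" for p
  proof -
    obtain om where om: "om \<in> Omega G0 R" "p = qmap G0 R v w om"
      using p(1) unfolding cell_interior_def cell_def by blast
    then have "seq_has_prefix om e'" "seq_has_prefix om f'"
      using p cell_interior_imp_seq_has_prefix by metis+
    then show False
      using assms seq_has_prefix_comparable by blast
  qed
  then show ?thesis
    by blast
qed

lemma expanding_terminals: "expanding G0 R v w \<Longrightarrow> v \<in> verts R \<and> w \<in> verts R \<and> v \<noteq> w"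
  unfolding expanding_def by blast

lemma expanding_incident_arc:
  "expanding G0 R v w \<Longrightarrow> x \<in> verts R \<Longrightarrow> \<exists>a\<in>arcs R. tail R a = x \<or> head R a = x"
  unfolding expanding_def no_isolated_def by blast

lemma expanding_interior_vertex:
  assumes "expanding G0 R v w"
  shows "\<exists>x\<in>verts R. x \<noteq> v \<and> x \<noteq> w"
proof (rule ccontr)
  assume "\<not> (\<exists>x\<in>verts R. x \<noteq> v \<and> x \<noteq> w)"
  then have "card (verts R) \<le> card {v, w}"
    by (intro card_mono) auto
  also have "\<dots> \<le> 2"
    by (simp add: card_insert_if)
  finally show False
    using assms unfolding expanding_def by simp
qed

text \<open>Appending av (an arc at v) while the tracked endpoint is the initial end of the current edge,
  and aw (an arc at w) while it is the terminal end, never replaces that endpoint;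
  side_after k is the end it occupies after k steps.\<close>
fun side_after :: "('c,'d) pre_digraph \<Rightarrow> 'c \<Rightarrow> 'c \<Rightarrow> 'd \<Rightarrow> 'd \<Rightarrow> bool \<Rightarrow> nat \<Rightarrow> bool" where
  "side_after R v w av aw s 0 = s"
| "side_after R v w av aw s (Suc k) =
     (let s' = side_after R v w av aw s k in tail R (if s' then av else aw) = (if s' then v else w))"

lemma ep_rev_keep_side:
  assumes "v \<noteq> w" "tail R av = v \<or> head R av = v" "tail R aw = w \<or> head R aw = w"
  shows "ep_rev G0 R v w (tail R (if s then av else aw) = (if s then v else w)) b
           ((if s then av else aw) # zs) = ep_rev G0 R v w s b zs"
  using assms by (cases s) (auto simp: Let_def)

lemma exists_seq_representing:
  assumes ex: "expanding G0 R v w" and b: "b \<in> arcs G0" and ys0: "set ys0 \<subseteq> arcs R"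
  shows "\<exists>f. (b, f) \<in> Omega G0 R \<and> pref (length ys0) (b, f) = (b, ys0) \<and>
             represents G0 R v w (b, f) (ep_rev G0 R v w s0 b (rev ys0))"
proof -
  obtain av aw where av: "av \<in> arcs R" "tail R av = v \<or> head R av = v"
    and aw: "aw \<in> arcs R" "tail R aw = w \<or> head R aw = w"
    using expanding_incident_arc[OF ex] expanding_terminals[OF ex] by meson
  have vw: "v \<noteq> w"
    using expanding_terminals[OF ex] by blast
  define L where "L = length ys0"
  define side where "side = side_after R v w av aw s0"
  define f where "f i = (if i < L then ys0 ! i else if side (i - L) then av else aw)" for i
  have prefix: "map f [0..<L] = ys0"
    by (rule nth_equalityI) (simp_all add: f_def L_def)
  have keep: "ep_rev G0 R v w (side k) b (rev (map f [0..<L + k])) = ep_rev G0 R v w s0 b (rev ys0)"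
    for k
  proof (induction k)
    case 0
    show ?case
      using prefix by (simp add: side_def)
  next
    case (Suc k)
    have rr: "rev (map f [0..<L + Suc k]) = (if side k then av else aw) # rev (map f [0..<L + k])"
      by (simp add: f_def)
    have "ep_rev G0 R v w (side (Suc k)) b (rev (map f [0..<L + Suc k]))
        = ep_rev G0 R v w (side k) b (rev (map f [0..<L + k]))"
      unfolding rr side_def side_after.simps(2) Let_def by (rule ep_rev_keep_side[OF vw av(2) aw(2)])
    then show ?case
      using Suc.IH by simp
  qed
  have "(b, f) \<in> Omega G0 R"
    using b ys0 av(1) aw(1) by (auto simp: Omega_def f_def L_def)
  moreover have "pref (length ys0) (b, f) = (b, ys0)"
    using prefix by (simp add: pref_def L_def)
  moreover have "represents G0 R v w (b, f) (ep_rev G0 R v w s0 b (rev ys0))"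
    unfolding represents_def
  proof (intro exI allI impI)
    fix n assume "L \<le> n"
    then show "ep_rev G0 R v w s0 b (rev ys0) \<in> edge_ends G0 R v w (pref n (b, f))"
      using keep[of "n - L"] by (cases "side (n - L)") (auto simp: edge_ends_pref)
  qed
  ultimately show ?thesis
    by blast
qed

lemma expanding_arc_at_v_avoids_w:
  assumes "expanding G0 R v w" "a \<in> arcs R" "tail R a = v \<or> head R a = v"
  shows "tail R a \<noteq> w \<and> head R a \<noteq> w"
  using expanding_arc_not_vw[OF assms(1,2)] expanding_terminals[OF assms(1)] assms(3) by auto

lemma expanding_swap: "expanding G0 R v w \<Longrightarrow> expanding G0 R w v"
  unfolding expanding_def by auto

text \<open>Follow an arc a at an interior vertex x by an arc c at v if x is the tail of a, at w
  otherwise. As c does not touch the other terminal, each endpoint of the edge ys a c is either an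
  interior vertex of the copy of R replacing ys a or, through the end of c at v (resp. w), the
  vertex x of the copy replacing ys; both are newer than the edge ys.\<close>
lemma expanding_escaping_arcs:
  assumes ex: "expanding G0 R v w"
  obtains a c where "a \<in> arcs R" "c \<in> arcs R"
    "\<And>s b ys. length ys < vertex_level (ep_rev G0 R v w s b (c # a # rev ys))"
proof -
  obtain x where x: "x \<in> verts R" "x \<noteq> v" "x \<noteq> w"
    using expanding_interior_vertex[OF ex] by blast
  obtain a where a: "a \<in> arcs R" "tail R a = x \<or> head R a = x"
    using expanding_incident_arc[OF ex x(1)] by blast
  obtain av aw where av: "av \<in> arcs R" "tail R av = v \<or> head R av = v"
    and aw: "aw \<in> arcs R" "tail R aw = w \<or> head R aw = w"
    using expanding_incident_arc[OF ex] expanding_terminals[OF ex] by meson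
  show thesis
  proof (cases "tail R a = x")
    case True
    have "tail R av \<noteq> w" "head R av \<noteq> w"
      using expanding_arc_at_v_avoids_w[OF ex av] by simp_all
    with True x have "length ys < vertex_level (ep_rev G0 R v w s b (av # a # rev ys))" for s b ys
      by (cases s) (auto simp: Let_def)
    with a(1) av(1) show thesis
      by (rule that)
  next
    case False
    with a(2) have "head R a = x"
      by blast
    have "tail R aw \<noteq> v" "head R aw \<noteq> v"
      using expanding_arc_at_v_avoids_w[OF expanding_swap[OF ex] aw] by simp_all
    with \<open>head R a = x\<close> x
    have "length ys < vertex_level (ep_rev G0 R v w s b (aw # a # rev ys))" for s b ys
      by (cases s) (auto simp: Let_def)
    with a(1) aw(1) show thesis
      by (rule that)
  qed
qed

lemma exists_seq_not_representing:
  assumes ex: "expanding G0 R v w" and b: "b \<in> arcs G0" and ys0: "set ys0 \<subseteq> arcs R"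
  shows "\<exists>f. (b, f) \<in> Omega G0 R \<and> pref (length ys0) (b, f) = (b, ys0) \<and>
             (\<forall>u. \<not> represents G0 R v w (b, f) u)"
proof -
  obtain a c where a: "a \<in> arcs R" and c: "c \<in> arcs R"
    and escape: "\<And>s ys. length ys < vertex_level (ep_rev G0 R v w s b (c # a # rev ys))"
    using expanding_escaping_arcs[OF ex] by metis
  define L where "L = length ys0"
  define f where "f i = (if i < L then ys0 ! i else if even (i - L) then a else c)" for i
  have prefix: "map f [0..<L] = ys0"
    by (rule nth_equalityI) (simp_all add: f_def L_def)
  have "(b, f) \<in> Omega G0 R"
    using b a c by (auto simp: Omega_def f_def L_def intro: subsetD[OF ys0])
  moreover have "pref (length ys0) (b, f) = (b, ys0)"
    using prefix by (simp add: pref_def L_def)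
  moreover have "\<not> represents G0 R v w (b, f) u" for u
  proof
    assume "represents G0 R v w (b, f) u"
    then obtain N where N: "\<And>n. N \<le> n \<Longrightarrow> u \<in> edge_ends G0 R v w (pref n (b, f))"
      unfolding represents_def by blast
    define ys where "ys = map f [0..<L + 2 * (N + vertex_level u)]"
    have "rev (map f [0..<length ys + 2]) = c # a # rev ys"
      by (simp add: ys_def f_def)
    then have "edge_ends G0 R v w (pref (length ys + 2) (b, f)) =
      {ep_rev G0 R v w True b (c # a # rev ys), ep_rev G0 R v w False b (c # a # rev ys)}"
      unfolding edge_ends_pref by simp
    moreover have "u \<in> edge_ends G0 R v w (pref (length ys + 2) (b, f))"
      using N by (simp add: ys_def)
    ultimately obtain s where "u = ep_rev G0 R v w s b (c # a # rev ys)"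
      by blast
    then have "length ys < vertex_level u"
      by (simp only: escape)
    then show False
      by (simp add: ys_def)
  qed
  ultimately show ?thesis
    by blast
qed

lemma qmap_in_cell_interior:
  assumes ex: "expanding G0 R v w" and om: "om \<in> Omega G0 R" and "seq_has_prefix om e'"
    and "\<And>u. u \<in> edge_ends G0 R v w e' \<Longrightarrow> \<not> represents G0 R v w om u"
  shows "qmap G0 R v w om \<in> cell_interior G0 R v w e'"
  using assms represents_if_qmap_in_vpts[OF ex om]
  unfolding cell_interior_def cell_def cell_boundary_def by blast

lemma vertex_level_edge_ends_le: "u \<in> edge_ends G0 R v w (b, zs) \<Longrightarrow> vertex_level u \<le> length zs"
  unfolding edge_ends_def edge_src_def edge_tgt_def using vertex_level_ep_rev_le by fastforce

lemma cell_interior_has_gluing_vertex: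
  assumes ex: "expanding G0 R v w" and e': "e' \<in> edges_n G0 R n"
  shows "\<exists>u\<in>gluing_vertices G0 R v w. vpts G0 R v w u \<inter> cell_interior G0 R v w e' \<noteq> {}"
proof -
  obtain b zs where e'_eq: "e' = (b, zs)" and b: "b \<in> arcs G0"
    and zs: "length zs = n" "set zs \<subseteq> arcs R"
    using e' unfolding edges_n_def by auto
  obtain x where x: "x \<in> verts R" "x \<noteq> v" "x \<noteq> w"
    using expanding_interior_vertex[OF ex] by blast
  obtain a where a: "a \<in> arcs R" "tail R a = x \<or> head R a = x"
    using expanding_incident_arc[OF ex x(1)] by blast
  define u :: "('a,'b,'c,'d) gvertex" where "u = Inr (b, zs, x)"
  have "ep_rev G0 R v w (tail R a = x) b (rev (zs @ [a])) = u"
    using a(2) x by (auto simp: u_def Let_def)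
  then obtain f where f: "(b, f) \<in> Omega G0 R" "pref (Suc n) (b, f) = (b, zs @ [a])"
    "represents G0 R v w (b, f) u"
    using exists_seq_representing[OF ex b, of "zs @ [a]" "tail R a = x"] zs a(1) by auto
  have "seq_has_prefix (b, f) e'"
    using pref_take[of n "Suc n" "(b, f)"] f(2) zs(1) by (simp add: seq_has_prefix_def e'_eq)
  moreover have "\<not> represents G0 R v w (b, f) u'" if "u' \<in> edge_ends G0 R v w e'" for u'
  proof
    assume "represents G0 R v w (b, f) u'"
    then have "u' = u"
      using represents_unique[OF ex f(1)] f(3) by blast
    moreover have "vertex_level u' \<le> n"
      using vertex_level_edge_ends_le that zs(1) unfolding e'_eq by fastforce
    ultimately show False
      by (simp add: u_def zs(1))
  qed
  ultimately have "qmap G0 R v w (b, f) \<in> cell_interior G0 R v w e'"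
    using qmap_in_cell_interior[OF ex f(1)] by blast
  moreover have "qmap G0 R v w (b, f) \<in> vpts G0 R v w u"
    unfolding vpts_def using f(1,3) by blast
  moreover have "u \<in> gluing_vertices G0 R v w"
    unfolding gluing_vertices_def verts_n_def u_def using b zs x by blast
  ultimately show ?thesis
    by blast
qed

lemma cell_interior_has_regular_point:
  assumes ex: "expanding G0 R v w" and e': "e' \<in> edges_n G0 R n"
  shows "\<exists>p\<in>cell_interior G0 R v w e'. regular_point G0 R v w p"
proof -
  obtain b zs where e'_eq: "e' = (b, zs)" and b: "b \<in> arcs G0" and zs: "set zs \<subseteq> arcs R"
    using e' unfolding edges_n_def by auto
  obtain f where f: "(b, f) \<in> Omega G0 R" "pref (length zs) (b, f) = (b, zs)"
    "\<And>u. \<not> represents G0 R v w (b, f) u"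
    using exists_seq_not_representing[OF ex b zs] by blast
  have "qmap G0 R v w (b, f) \<in> cell_interior G0 R v w e'"
    using qmap_in_cell_interior[OF ex f(1)] f(2,3) by (simp add: seq_has_prefix_def e'_eq)
  moreover have "regular_point G0 R v w (qmap G0 R v w (b, f))"
    unfolding regular_point_def limit_space_def using f(1,3) represents_if_qmap_in_vpts[OF ex f(1)] by blast
  ultimately show ?thesis
    by blast
qed

theorem proposition1p23:
  fixes G0 :: "('a,'b) pre_digraph" and R :: "('c,'d) pre_digraph" and v w :: 'c
  assumes "expanding G0 R v w"
  shows "(\<forall>n. \<forall>e'\<in>edges_n G0 R n.
            (\<exists>u\<in>gluing_vertices G0 R v w. vpts G0 R v w u \<inter> cell_interior G0 R v w e' \<noteq> {}) \<and>
            (\<exists>p\<in>cell_interior G0 R v w e'. regular_point G0 R v w p))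
       \<and> (\<forall>n. \<forall>e'\<in>edges_n G0 R n. \<forall>p\<in>cell_interior G0 R v w e'.
            \<forall>om\<in>Omega G0 R. qmap G0 R v w om = p \<longrightarrow> seq_has_prefix om e')
       \<and> (\<forall>n m. \<forall>e'\<in>edges_n G0 R n. \<forall>f'\<in>edges_n G0 R m.
            edge_prefix e' f' \<longrightarrow> cell G0 R v w f' \<subseteq> cell G0 R v w e')
       \<and> (\<forall>n m. \<forall>e'\<in>edges_n G0 R n. \<forall>f'\<in>edges_n G0 R m.
            \<not> edge_prefix e' f' \<and> \<not> edge_prefix f' e' \<longrightarrow>
            cell_interior G0 R v w e' \<inter> cell_interior G0 R v w f' = {})"
  by (intro conjI allI ballI impI; (elim conjE)?)
    (simp_all add: assms cell_interior_has_gluing_vertex cell_interior_has_regular_point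
      cell_interior_imp_seq_has_prefix cell_mono cell_interior_disjoint)

end
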